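(* For every class $\mathcal{G}$ of graphs of bounded shrub-depth and every positive integer $r$, there exists a positive integer $c$ such that every graph in $\mathcal{G}$ has a weak $r$-guidance system of maximum outdegree at most $c$.
   Context: All graphs are finite, simple and undirected. A partial orientation of $G$ is a directed graph $\vec{H}$ on $V(G)$ such that every $(u,v)\in E(\vec{H})$ satisfies $uv\in E(G)$ (each edge of $G$ may be directed in neither, one, or both directions). $B_{\vec{H}}(v,a)$ denotes the set of vertices reachable from $v$ by a directed path in $\vec{H}$ of length at most $a$. A weak $r$-guidance system of $G$ is a partial orientation $\vec{H}$ such that for any distinct vertices $u,v$ at distance $\ell\le r$ in $G$ there exist non-negative integers $a,b$ with $a+b=\ell-1$ such that $G$ contains an edge between $B_{\vec{H}}(u,a)$ and $B_{\vec{H}}(v,b)$. Shrub-depth: for a positive integer $m$, an $m$-signature is a function $S$ assigning to each positive integer $i$ a symmetric relation $S(i)\subseteq[m]\times[m]$. For a positive integer $d$, an $(m,d)$-tree model of a graph $G$ is a triple $(T,\varphi,S)$ where $T$ is a rooted tree with leaf set $V(G)$ in which every root-leaf path has length $d$, $\varphi:V(G)\to[m]$, $S$ is an $m$-signature, and for all $u,v\in V(G)$, if $2i$ is the distance between $u$ and $v$ in $T$ then $uv\in E(G)$ iff $(\varphi(u),\varphi(v))\in S(i)$. A class has shrub-depth at most $d$ if for some positive integer $m$ every graph in the class has an $(m,d)$-tree model; it has bounded shrub-depth if it has shrub-depth at most $d$ for some $d$. *)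

theory Defs
  imports Main
begin

type_synonym 'a graph = "'a set \<times> ('a \<times> 'a) set"

definition verts :: "'a graph \<Rightarrow> 'a set" where "verts G = fst G"
definition edges :: "'a graph \<Rightarrow> ('a \<times> 'a) set" where "edges G = snd G"

definition simple_graph :: "'a graph \<Rightarrow> bool" where
  "simple_graph G \<longleftrightarrow> finite (verts G) \<and> edges G \<subseteq> verts G \<times> verts G
     \<and> (\<forall>u v. (u, v) \<in> edges G \<longrightarrow> (v, u) \<in> edges G)
     \<and> (\<forall>u. (u, u) \<notin> edges G)"

definition graph_dist_is :: "'a graph \<Rightarrow> 'a \<Rightarrow> 'a \<Rightarrow> nat \<Rightarrow> bool" where
  "graph_dist_is G u v l \<longleftrightarrow> (u, v) \<in> (edges G) ^^ l \<and> (\<forall>k<l. (u, v) \<notin> (edges G) ^^ k)"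

text \<open>Partial orientation: a set of arcs, each arc along an edge of G
  (an edge may be oriented in neither, one, or both directions).\<close>
definition partial_orientation :: "'a graph \<Rightarrow> ('a \<times> 'a) set \<Rightarrow> bool" where
  "partial_orientation G H \<longleftrightarrow> H \<subseteq> edges G"

definition ball_out :: "('a \<times> 'a) set \<Rightarrow> 'a \<Rightarrow> nat \<Rightarrow> 'a set" where
  "ball_out H v a = {w. \<exists>k\<le>a. (v, w) \<in> H ^^ k}"

definition weak_guidance_system :: "'a graph \<Rightarrow> nat \<Rightarrow> ('a \<times> 'a) set \<Rightarrow> bool" where
  "weak_guidance_system G r H \<longleftrightarrow> partial_orientation G H \<and>
     (\<forall>u\<in>verts G. \<forall>v\<in>verts G. \<forall>l. u \<noteq> v \<and> l \<le> r \<and> graph_dist_is G u v l \<longrightarrow>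
        (\<exists>a b. a + b = l - 1 \<and>
           (\<exists>x\<in>ball_out H u a. \<exists>y\<in>ball_out H v b. (x, y) \<in> edges G)))"

definition max_outdegree_le :: "'a graph \<Rightarrow> ('a \<times> 'a) set \<Rightarrow> nat \<Rightarrow> bool" where
  "max_outdegree_le G H c \<longleftrightarrow> (\<forall>v\<in>verts G. card {w. (v, w) \<in> H} \<le> c)"

text \<open>A rooted tree T whose leaf set is V(G) and in which every
  root-leaf path has length d is encoded by its ancestor map: anc i v is
  (a label of) the ancestor of leaf v at height i, so anc 0 v is the leaf v
  itself (anc 0 injective on V), anc d is the root (constant), and leaves
  sharing the ancestor at height i share it at height i+1.  Every node of T lies
  on a root-leaf path, so T is determined by this data up to isomorphism.
  For distinct leaves u, v, the distance in T is 2i where i is the least height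
  with anc i u = anc i v.\<close>

definition tree_anc :: "'a set \<Rightarrow> nat \<Rightarrow> (nat \<Rightarrow> 'a \<Rightarrow> nat) \<Rightarrow> bool" where
  "tree_anc V d anc \<longleftrightarrow> inj_on (anc 0) V
     \<and> (\<forall>u\<in>V. \<forall>v\<in>V. anc d u = anc d v)
     \<and> (\<forall>i<d. \<forall>u\<in>V. \<forall>v\<in>V. anc i u = anc i v \<longrightarrow> anc (Suc i) u = anc (Suc i) v)"

definition tree_half_dist :: "(nat \<Rightarrow> 'a \<Rightarrow> nat) \<Rightarrow> 'a \<Rightarrow> 'a \<Rightarrow> nat" where
  "tree_half_dist anc u v = (LEAST i. anc i u = anc i v)"

definition signature :: "nat \<Rightarrow> (nat \<Rightarrow> (nat \<times> nat) set) \<Rightarrow> bool" where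
  "signature m S \<longleftrightarrow> (\<forall>i>0. S i \<subseteq> {1..m} \<times> {1..m} \<and> (\<forall>x y. (x, y) \<in> S i \<longrightarrow> (y, x) \<in> S i))"

definition has_tree_model :: "nat \<Rightarrow> nat \<Rightarrow> 'a graph \<Rightarrow> bool" where
  "has_tree_model m d G \<longleftrightarrow> (\<exists>anc \<phi> S.
     tree_anc (verts G) d anc \<and> (\<forall>v\<in>verts G. \<phi> v \<in> {1..m}) \<and> signature m S \<and>
     (\<forall>u\<in>verts G. \<forall>v\<in>verts G. u \<noteq> v \<longrightarrow>
        ((u, v) \<in> edges G \<longleftrightarrow> (\<phi> u, \<phi> v) \<in> S (tree_half_dist anc u v))))"

definition bounded_shrub_depth :: "'a graph set \<Rightarrow> bool" where
  "bounded_shrub_depth \<C> \<longleftrightarrow> (\<exists>d>0. \<exists>m>0. \<forall>G\<in>\<C>. has_tree_model m d G)"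

end

theory Submission
  imports Defs
begin

(* Induction on the depth of the tree model. The subtrees below the children of the root cut
   G into parts with tree models of smaller depth, and two vertices of different parts are
   adjacent iff their colours are related at the top level. Besides the guidance systems of the
   parts, every vertex gets BFS arcs towards the nearest vertex of each colour in its own part,
   and jump arcs to vertices of colour k in at most r + 2 other parts from which colour k' is
   reachable within delta steps inside the part (for all k, k' and delta <= r).
   A shortest u-v path leaving the part of v is then shadowed from u by vertices of the same
   colours: inside a part BFS arcs keep pace with the path, and at a crossing between parts a
   jump arc does, landing in the part of the path or in a part the path never meets. At the last
   crossing the shadow is adjacent to the vertex that BFS arcs reach from v. *)

lemma relpow_mono:
  fixes R :: "('a \<times> 'a) set"
  shows "R \<subseteq> R' \<Longrightarrow> R ^^ n \<subseteq> R' ^^ n"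
  by (induction n) (simp_all add: relcomp_mono)

lemma relpow_sym: "sym R \<Longrightarrow> (a, b) \<in> R ^^ n \<Longrightarrow> (b, a) \<in> R ^^ n"
proof (induction n arbitrary: b)
  case (Suc n)
  then obtain y where "(a, y) \<in> R ^^ n" "(y, b) \<in> R" by (auto elim: relpow_Suc_E)
  with Suc show ?case by (meson relpow_Suc_I2 symD)
qed simp

lemma relpow_of_walk:
  fixes R :: "('a \<times> 'a) set"
  assumes "p \<le> q" and "\<And>i. p \<le> i \<Longrightarrow> i < q \<Longrightarrow> (f i, f (Suc i)) \<in> R"
  shows "(f p, f q) \<in> R ^^ (q - p)"
  unfolding relpow_fun_conv
  by (rule exI[of _ "\<lambda>i. f (p + i)"]) (use assms in auto)

lemma ball_out_self: "v \<in> ball_out H v a"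
  unfolding ball_out_def by (auto intro: exI[of _ 0])

lemma ball_out_arc: "(v, w) \<in> H \<Longrightarrow> w \<in> ball_out H v 1"
  unfolding ball_out_def by (auto intro: exI[of _ 1])

lemma ball_out_trans: "w \<in> ball_out H v a \<Longrightarrow> x \<in> ball_out H w b \<Longrightarrow> x \<in> ball_out H v (a + b)"
  unfolding ball_out_def by (blast intro: relpow_trans add_mono)

lemma ball_out_mono: "H \<subseteq> H' \<Longrightarrow> a \<le> a' \<Longrightarrow> ball_out H v a \<subseteq> ball_out H' v a'"
  unfolding ball_out_def using relpow_mono by (blast intro: order_trans)

lemma verts_pair [simp]: "verts (V, E) = V" and edges_pair [simp]: "edges (V, E) = E"
  unfolding verts_def edges_def by simp_all

definition induced_subgraph :: "'a graph \<Rightarrow> 'a set \<Rightarrow> 'a graph" where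
  "induced_subgraph G U = (verts G \<inter> U, edges G \<inter> U \<times> U)"

lemma verts_induced_subgraph [simp]: "verts (induced_subgraph G U) = verts G \<inter> U"
  and edges_induced_subgraph [simp]: "edges (induced_subgraph G U) = edges G \<inter> U \<times> U"
  unfolding induced_subgraph_def by simp_all

lemma simple_graph_induced_subgraph: "simple_graph G \<Longrightarrow> simple_graph (induced_subgraph G U)"
  unfolding simple_graph_def by auto

lemma graph_dist_is_induced_subgraph:
  assumes "graph_dist_is G u v l" and "(u, v) \<in> edges (induced_subgraph G U) ^^ l"
  shows "graph_dist_is (induced_subgraph G U) u v l"
  using assms relpow_mono[of "edges (induced_subgraph G U)" "edges G"]
  unfolding graph_dist_is_def by auto

lemma weak_guidance_system_subsingleton:
  "(\<And>u v. u \<in> verts G \<Longrightarrow> v \<in> verts G \<Longrightarrow> u = v) \<Longrightarrow> weak_guidance_system G r {}"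
  unfolding weak_guidance_system_def partial_orientation_def by blast

lemma max_outdegree_le_mono: "max_outdegree_le G H c \<Longrightarrow> c \<le> c' \<Longrightarrow> max_outdegree_le G H c'"
  unfolding max_outdegree_le_def by (meson order_trans)

lemma tree_anc_subsingleton: "tree_anc V 0 anc \<Longrightarrow> u \<in> V \<Longrightarrow> v \<in> V \<Longrightarrow> u = v"
  unfolding tree_anc_def by (meson inj_onD)

lemma tree_anc_eq_mono:
  assumes "tree_anc V d anc" "u \<in> V" "v \<in> V" "i \<le> j" "j \<le> d" "anc i u = anc i v"
  shows "anc j u = anc j v"
  using assms(4-6)
proof (induction j)
  case (Suc j)
  with assms(1-3) show ?case
    unfolding tree_anc_def by (metis Suc_leD Suc_le_lessD le_Suc_eq)
qed simp

lemma tree_half_dist_across_parts: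
  assumes "tree_anc V (Suc d) anc" "u \<in> V" "v \<in> V" "anc d u \<noteq> anc d v"
  shows "tree_half_dist anc u v = Suc d"
  unfolding tree_half_dist_def
proof (rule Least_equality)
  show "anc (Suc d) u = anc (Suc d) v"
    using assms unfolding tree_anc_def by blast
  show "Suc d \<le> i" if "anc i u = anc i v" for i
    using tree_anc_eq_mono[OF assms(1-3), of i d] that assms(4) by fastforce
qed

lemma has_tree_model_part:
  assumes "tree_anc (verts G) (Suc d) anc" and "\<forall>v\<in>verts G. \<phi> v \<in> {1..m}" and "signature m S"
    and "\<forall>u\<in>verts G. \<forall>v\<in>verts G. u \<noteq> v \<longrightarrow>
           ((u, v) \<in> edges G \<longleftrightarrow> (\<phi> u, \<phi> v) \<in> S (tree_half_dist anc u v))"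
  shows "has_tree_model m d (induced_subgraph G {w. anc d w = l})"
  unfolding has_tree_model_def
proof (intro exI[of _ anc] exI[of _ \<phi>] exI[of _ S] conjI)
  show "tree_anc (verts (induced_subgraph G {w. anc d w = l})) d anc"
    using assms(1) unfolding tree_anc_def by (auto intro: inj_on_subset)
qed (use assms in auto)

section \<open>Breadth-first orientations\<close>

definition bfs_dist :: "('a \<times> 'a) set \<Rightarrow> 'a set \<Rightarrow> 'a \<Rightarrow> nat" where
  "bfs_dist R T z = (LEAST n. \<exists>w\<in>T. (z, w) \<in> R ^^ n)"

definition bfs_next :: "('a \<times> 'a) set \<Rightarrow> 'a set \<Rightarrow> 'a \<Rightarrow> 'a" where
  "bfs_next R T z = (SOME z'. (z, z') \<in> R \<and> (\<exists>w\<in>T. (z', w) \<in> R ^^ (bfs_dist R T z - 1)))"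

definition bfs_orientation :: "('a \<times> 'a) set \<Rightarrow> ('k \<Rightarrow> 'a set) \<Rightarrow> 'k set \<Rightarrow> ('a \<times> 'a) set" where
  "bfs_orientation R T K =
     {(z, bfs_next R (T k) z) | z k. k \<in> K \<and> z \<notin> T k \<and> (\<exists>n. \<exists>w\<in>T k. (z, w) \<in> R ^^ n)}"

lemma bfs_next_step:
  assumes "(z, w) \<in> R ^^ n" "w \<in> T" "z \<notin> T"
  shows "(z, bfs_next R T z) \<in> R" "\<exists>w'\<in>T. (bfs_next R T z, w') \<in> R ^^ (bfs_dist R T z - 1)"
    "bfs_dist R T z - 1 < n"
proof -
  have "\<exists>w\<in>T. (z, w) \<in> R ^^ bfs_dist R T z"
    unfolding bfs_dist_def using assms(1,2)
    by (intro LeastI_ex[where P = "\<lambda>n. \<exists>w\<in>T. (z, w) \<in> R ^^ n"]) blast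
  then obtain w0 where w0: "w0 \<in> T" "(z, w0) \<in> R ^^ bfs_dist R T z" ..
  have dist_le: "bfs_dist R T z \<le> n"
    unfolding bfs_dist_def using assms(1,2) by (intro Least_le) blast
  have "bfs_dist R T z \<noteq> 0"
  proof
    assume "bfs_dist R T z = 0"
    then have "w0 = z" using w0(2) by simp
    then show False using w0(1) assms(3) by simp
  qed
  then obtain D where D: "bfs_dist R T z = Suc D"
    using not0_implies_Suc by blast
  obtain y where "(z, y) \<in> R" "(y, w0) \<in> R ^^ D"
    using w0(2) unfolding D by (rule relpow_Suc_E2)
  then have "(z, y) \<in> R \<and> (\<exists>w\<in>T. (y, w) \<in> R ^^ (bfs_dist R T z - 1))"
    using D w0(1) by auto
  then have "(z, bfs_next R T z) \<in> R \<and> (\<exists>w\<in>T. (bfs_next R T z, w) \<in> R ^^ (bfs_dist R T z - 1))"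
    unfolding bfs_next_def by (rule someI)
  then show "(z, bfs_next R T z) \<in> R" "\<exists>w'\<in>T. (bfs_next R T z, w') \<in> R ^^ (bfs_dist R T z - 1)"
    by auto
  show "bfs_dist R T z - 1 < n"
    using D dist_le by simp
qed

lemma bfs_orientation_subset: "bfs_orientation R T K \<subseteq> R"
proof
  fix p assume "p \<in> bfs_orientation R T K"
  then obtain z k n w where "p = (z, bfs_next R (T k) z)" "z \<notin> T k" "w \<in> T k" "(z, w) \<in> R ^^ n"
    unfolding bfs_orientation_def by blast
  then show "p \<in> R" by (simp add: bfs_next_step(1))
qed

lemma card_bfs_orientation_out:
  assumes "finite K"
  shows "card {w. (z, w) \<in> bfs_orientation R T K} \<le> card K"
proof -
  have "{w. (z, w) \<in> bfs_orientation R T K} \<subseteq> (\<lambda>k. bfs_next R (T k) z) ` K"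
    unfolding bfs_orientation_def by blast
  then have "card {w. (z, w) \<in> bfs_orientation R T K} \<le> card ((\<lambda>k. bfs_next R (T k) z) ` K)"
    using assms by (intro card_mono) simp_all
  also have "\<dots> \<le> card K"
    using assms by (rule card_image_le)
  finally show ?thesis .
qed

lemma bfs_orientation_reaches:
  assumes "k \<in> K" "(z, w) \<in> R ^^ n" "w \<in> T k"
  shows "\<exists>b\<in>T k. b \<in> ball_out (bfs_orientation R T K) z n"
  using assms(2,3)
proof (induction n arbitrary: z w rule: less_induct)
  case (less n)
  show ?case
  proof (cases "z \<in> T k")
    case True
    then show ?thesis by (intro bexI[of _ z] ball_out_self)
  next
    case False
    let ?H = "bfs_orientation R T K" and ?D = "bfs_dist R (T k) z - 1"
    obtain w' where w': "w' \<in> T k" "(bfs_next R (T k) z, w') \<in> R ^^ ?D"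
      using bfs_next_step(2)[OF less.prems False] by blast
    have less_n: "?D < n"
      using bfs_next_step(3)[OF less.prems False] .
    obtain b where b: "b \<in> T k" "b \<in> ball_out ?H (bfs_next R (T k) z) ?D"
      using less.IH[OF less_n w'(2,1)] by blast
    have "(z, bfs_next R (T k) z) \<in> ?H"
      unfolding bfs_orientation_def using assms(1) False less.prems by blast
    then have "bfs_next R (T k) z \<in> ball_out ?H z 1"
      by (rule ball_out_arc)
    from ball_out_trans[OF this b(2)] have "b \<in> ball_out ?H z (1 + ?D)" .
    moreover have "ball_out ?H z (1 + ?D) \<subseteq> ball_out ?H z n"
      using less_n by (intro ball_out_mono) simp_all
    ultimately show ?thesis using b(1) by blast
  qed
qed

section \<open>Bounded transversals\<close>

definition transversal_rep :: "('a \<Rightarrow> 'b) \<Rightarrow> 'a set \<Rightarrow> 'b \<Rightarrow> 'a" where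
  "transversal_rep f A y = (SOME x. x \<in> A \<and> f x = y)"

definition bounded_labels :: "nat \<Rightarrow> ('a \<Rightarrow> 'b) \<Rightarrow> 'a set \<Rightarrow> 'b set" where
  "bounded_labels N f A = (SOME L. finite L \<and> L \<subseteq> f ` A \<and> card L = min N (card (f ` A)))"

definition bounded_transversal :: "nat \<Rightarrow> ('a \<Rightarrow> 'b) \<Rightarrow> 'a set \<Rightarrow> 'a set" where
  "bounded_transversal N f A = transversal_rep f A ` bounded_labels N f A"

lemma transversal_rep:
  assumes "y \<in> f ` A"
  shows "transversal_rep f A y \<in> A" "f (transversal_rep f A y) = y"
proof -
  have "transversal_rep f A y \<in> A \<and> f (transversal_rep f A y) = y"
    unfolding transversal_rep_def by (rule someI_ex) (use assms in blast)
  then show "transversal_rep f A y \<in> A" "f (transversal_rep f A y) = y" by simp_all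
qed

lemma bounded_labels:
  "finite (bounded_labels N f A)" "bounded_labels N f A \<subseteq> f ` A"
  "card (bounded_labels N f A) = min N (card (f ` A))"
proof -
  have "min N (card (f ` A)) \<le> card (f ` A)"
    by (rule min.cobounded2)
  then obtain L where L: "L \<subseteq> f ` A" "card L = min N (card (f ` A))" "finite L"
    by (rule obtain_subset_with_card_n)
  have "finite (bounded_labels N f A) \<and> bounded_labels N f A \<subseteq> f ` A \<and>
      card (bounded_labels N f A) = min N (card (f ` A))"
    unfolding bounded_labels_def by (rule someI[of _ L]) (use L in simp)
  then show "finite (bounded_labels N f A)" "bounded_labels N f A \<subseteq> f ` A"
    "card (bounded_labels N f A) = min N (card (f ` A))"
    by simp_all
qed

lemma bounded_transversal_subset: "bounded_transversal N f A \<subseteq> A"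
proof
  fix x assume "x \<in> bounded_transversal N f A"
  then obtain y where "y \<in> bounded_labels N f A" "x = transversal_rep f A y"
    unfolding bounded_transversal_def ..
  then show "x \<in> A"
    using transversal_rep(1)[of y f A] bounded_labels(2)[of N f A] by auto
qed

lemma finite_bounded_transversal: "finite (bounded_transversal N f A)"
  unfolding bounded_transversal_def using bounded_labels(1)[of N f A] by (rule finite_imageI)

lemma card_bounded_transversal: "card (bounded_transversal N f A) \<le> N"
proof -
  have "card (bounded_transversal N f A) \<le> card (bounded_labels N f A)"
    unfolding bounded_transversal_def using bounded_labels(1)[of N f A] by (rule card_image_le)
  also have "\<dots> \<le> N"
    using bounded_labels(3)[of N f A] by simp
  finally show ?thesis .
qed

lemma bounded_transversal_hits:
  assumes "finite A" "x \<in> A" "finite P" "card P < N"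
  shows "\<exists>w\<in>bounded_transversal N f A. f w = f x \<or> f w \<notin> P"
proof -
  let ?L = "bounded_labels N f A"
  have "\<exists>y\<in>?L. y = f x \<or> y \<notin> P"
  proof (cases "card (f ` A) \<le> N")
    case True
    then have "card ?L = card (f ` A)"
      using bounded_labels(3)[of N f A] by simp
    with assms(1) bounded_labels(2)[of N f A] have "?L = f ` A"
      by (intro card_subset_eq) simp_all
    then show ?thesis
      using assms(2) by blast
  next
    case False
    have "\<not> ?L \<subseteq> P"
    proof
      assume "?L \<subseteq> P"
      then have "card ?L \<le> card P"
        by (rule card_mono[OF assms(3)])
      with False bounded_labels(3)[of N f A] assms(4) show False
        by simp
    qed
    then show ?thesis
      by blast
  qed
  then obtain y where y: "y \<in> ?L" "y = f x \<or> y \<notin> P" ..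
  have "y \<in> f ` A"
    using bounded_labels(2)[of N f A] y(1) ..
  then have "f (transversal_rep f A y) = y"
    by (rule transversal_rep(2))
  moreover have "transversal_rep f A y \<in> bounded_transversal N f A"
    unfolding bounded_transversal_def using y(1) by (rule imageI)
  ultimately show ?thesis
    using y(2) by metis
qed

section \<open>One level of a tree model\<close>

(* The parts {w. anc d w = l} are the subtrees hanging from the children of the root. *)
locale guidance_step =
  fixes V :: "'a set" and E :: "('a \<times> 'a) set"
    and anc :: "nat \<Rightarrow> 'a \<Rightarrow> nat" and col :: "'a \<Rightarrow> nat" and S :: "nat \<Rightarrow> (nat \<times> nat) set"
    and d m r c :: nat and part_guide :: "nat \<Rightarrow> ('a \<times> 'a) set"
  assumes simple: "simple_graph (V, E)"
    and tree: "tree_anc V (Suc d) anc"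
    and col_range: "v \<in> V \<Longrightarrow> col v \<in> {1..m}"
    and model: "u \<in> V \<Longrightarrow> v \<in> V \<Longrightarrow> u \<noteq> v \<Longrightarrow>
      (u, v) \<in> E \<longleftrightarrow> (col u, col v) \<in> S (tree_half_dist anc u v)"
    and part_guide_guides: "l \<in> anc d ` V \<Longrightarrow>
      weak_guidance_system (induced_subgraph (V, E) {w. anc d w = l}) r (part_guide l) \<and>
      max_outdegree_le (induced_subgraph (V, E) {w. anc d w = l}) (part_guide l) c"
begin

abbreviation part :: "'a \<Rightarrow> nat" where
  "part \<equiv> anc d"

abbreviation part_graph :: "nat \<Rightarrow> 'a graph" where
  "part_graph l \<equiv> induced_subgraph (V, E) {w. part w = l}"

lemma finite_V: "finite V"
  using simple unfolding simple_graph_def by simp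

lemma edge_in_V: "(x, y) \<in> E \<Longrightarrow> x \<in> V \<and> y \<in> V"
  using simple unfolding simple_graph_def by auto

lemma cross_edge:
  assumes "u \<in> V" "w \<in> V" "part u \<noteq> part w"
  shows "(u, w) \<in> E \<longleftrightarrow> (col u, col w) \<in> S (Suc d)"
  using model[OF assms(1,2)] tree_half_dist_across_parts[OF tree assms] assms(3) by auto

definition part_edges :: "('a \<times> 'a) set" where
  "part_edges = {(x, y) \<in> E. part x = part y}"

lemma sym_part_edges: "sym part_edges"
  using simple unfolding part_edges_def simple_graph_def sym_def by auto

lemma part_edges_relpow:
  "(a, b) \<in> part_edges ^^ n \<Longrightarrow> a \<in> V \<Longrightarrow>
    (a, b) \<in> edges (part_graph (part a)) ^^ n \<and> b \<in> V \<and> part b = part a"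
proof (induction n arbitrary: b)
  case (Suc n)
  obtain y where ay: "(a, y) \<in> part_edges ^^ n" and "(y, b) \<in> part_edges"
    using Suc.prems(1) by (rule relpow_Suc_E)
  then have yb: "(y, b) \<in> E" "part b = part y"
    unfolding part_edges_def by auto
  have IH: "(a, y) \<in> edges (part_graph (part a)) ^^ n" "y \<in> V" "part y = part a"
    using Suc.IH[OF ay Suc.prems(2)] by simp_all
  have "b \<in> V"
    using edge_in_V yb(1) by blast
  then have "(y, b) \<in> edges (part_graph (part a))"
    using yb IH by simp
  with IH(1) have "(a, b) \<in> edges (part_graph (part a)) ^^ Suc n"
    by (rule relpow_Suc_I)
  then show ?case
    using \<open>b \<in> V\<close> yb(2) IH(3) by simp
qed simp

lemma ball_out_within_part:
  assumes "H \<subseteq> part_edges" "a \<in> V" "b \<in> ball_out H a n"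
  shows "b \<in> V \<and> part b = part a"
proof -
  obtain k where "(a, b) \<in> H ^^ k"
    using assms(3) unfolding ball_out_def by blast
  then have "(a, b) \<in> part_edges ^^ k"
    using relpow_mono[OF assms(1)] by blast
  then show ?thesis
    using part_edges_relpow assms(2) by blast
qed

definition rec_arcs :: "('a \<times> 'a) set" where
  "rec_arcs = {(z, w). z \<in> V \<and> (z, w) \<in> part_guide (part z)}"

definition bfs_arcs :: "('a \<times> 'a) set" where
  "bfs_arcs = bfs_orientation part_edges (\<lambda>k. {w. col w = k}) {1..m}"

definition reach_set :: "nat \<Rightarrow> nat \<Rightarrow> nat \<Rightarrow> 'a set" where
  "reach_set k k' \<delta> = {a \<in> V. col a = k \<and> (\<exists>n\<le>\<delta>. \<exists>w. col w = k' \<and> (a, w) \<in> part_edges ^^ n)}"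

(* A walk of length at most r meets at most r + 1 parts, so one of r + 2 representatives of
   distinct parts avoids all of them (bounded_transversal_hits). *)
definition jump_arcs :: "('a \<times> 'a) set" where
  "jump_arcs = {(z, w) \<in> E. \<exists>k\<in>{1..m}. \<exists>k'\<in>{1..m}. \<exists>\<delta>\<le>r.
     w \<in> bounded_transversal (r + 2) part {a \<in> reach_set k k' \<delta>. part a \<noteq> part z}}"

definition guide :: "('a \<times> 'a) set" where
  "guide = rec_arcs \<union> bfs_arcs \<union> jump_arcs"

lemma part_guide_subset: "v \<in> V \<Longrightarrow> part_guide (part v) \<subseteq> edges (part_graph (part v))"
  using part_guide_guides[of "part v"] unfolding weak_guidance_system_def partial_orientation_def by simp

lemma part_guide_subset_rec_arcs:
  assumes "v \<in> V"
  shows "part_guide (part v) \<subseteq> rec_arcs"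
proof
  fix p assume "p \<in> part_guide (part v)"
  moreover obtain z w where p: "p = (z, w)"
    by fastforce
  ultimately have "(z, w) \<in> part_guide (part v)" "(z, w) \<in> E" "part z = part v"
    using part_guide_subset[OF assms] by auto
  then show "p \<in> rec_arcs"
    unfolding rec_arcs_def p using edge_in_V by simp
qed

lemma guide_subset: "guide \<subseteq> E"
proof -
  have "rec_arcs \<subseteq> E"
  proof
    fix p assume "p \<in> rec_arcs"
    then obtain z w where "p = (z, w)" "z \<in> V" "(z, w) \<in> part_guide (part z)"
      unfolding rec_arcs_def by blast
    then show "p \<in> E"
      using part_guide_subset by auto
  qed
  moreover have "bfs_arcs \<subseteq> part_edges"
    unfolding bfs_arcs_def by (rule bfs_orientation_subset)
  moreover have "part_edges \<subseteq> E" "jump_arcs \<subseteq> E"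
    unfolding part_edges_def jump_arcs_def by auto
  ultimately show ?thesis
    unfolding guide_def by blast
qed

lemma card_rec_arcs_out:
  assumes "z \<in> V"
  shows "card {w. (z, w) \<in> rec_arcs} \<le> c"
proof -
  have "max_outdegree_le (part_graph (part z)) (part_guide (part z)) c"
    using part_guide_guides assms by simp
  then have "card {w. (z, w) \<in> part_guide (part z)} \<le> c"
    unfolding max_outdegree_le_def using assms by simp
  moreover have "{w. (z, w) \<in> rec_arcs} = {w. (z, w) \<in> part_guide (part z)}"
    unfolding rec_arcs_def using assms by simp
  ultimately show ?thesis by simp
qed

lemma card_bfs_arcs_out: "card {w. (z, w) \<in> bfs_arcs} \<le> m"
  unfolding bfs_arcs_def using card_bfs_orientation_out[of "{1..m}"] by simp

lemma card_jump_arcs_out: "card {w. (z, w) \<in> jump_arcs} \<le> m * m * (r + 1) * (r + 2)"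
proof -
  define K where "K = {1..m} \<times> {1..m} \<times> {..r}"
  define F where "F = (\<lambda>(k, k', \<delta>). bounded_transversal (r + 2) part {a \<in> reach_set k k' \<delta>. part a \<noteq> part z})"
  have "{w. (z, w) \<in> jump_arcs} \<subseteq> (\<Union>t\<in>K. F t)"
    unfolding jump_arcs_def K_def F_def by force
  moreover have "finite (\<Union>t\<in>K. F t)"
    unfolding K_def F_def by (auto simp: finite_bounded_transversal)
  ultimately have "card {w. (z, w) \<in> jump_arcs} \<le> card (\<Union>t\<in>K. F t)"
    by (rule card_mono[rotated])
  also have "\<dots> \<le> (\<Sum>t\<in>K. card (F t))"
    by (rule card_UN_le) (simp add: K_def)
  also have "\<dots> \<le> (\<Sum>t\<in>K. r + 2)"
    unfolding F_def by (intro sum_mono) (simp add: case_prod_beta card_bounded_transversal)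
  also have "\<dots> = card K * (r + 2)"
    by simp
  also have "card K = m * m * (r + 1)"
    unfolding K_def by (simp add: card_cartesian_product algebra_simps)
  finally show ?thesis .
qed

lemma card_guide_out:
  assumes "z \<in> V"
  shows "card {w. (z, w) \<in> guide} \<le> c + m + m * m * (r + 1) * (r + 2)"
proof -
  have "{w. (z, w) \<in> guide} = {w. (z, w) \<in> rec_arcs} \<union> {w. (z, w) \<in> bfs_arcs} \<union> {w. (z, w) \<in> jump_arcs}"
    unfolding guide_def by blast
  then have "card {w. (z, w) \<in> guide} \<le>
      card ({w. (z, w) \<in> rec_arcs} \<union> {w. (z, w) \<in> bfs_arcs}) + card {w. (z, w) \<in> jump_arcs}"
    by (simp only: card_Un_le)
  moreover have "card ({w. (z, w) \<in> rec_arcs} \<union> {w. (z, w) \<in> bfs_arcs}) \<le>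
      card {w. (z, w) \<in> rec_arcs} + card {w. (z, w) \<in> bfs_arcs}"
    by (rule card_Un_le)
  ultimately show ?thesis
    using card_rec_arcs_out[OF assms] card_bfs_arcs_out[of z] card_jump_arcs_out[of z] by linarith
qed

lemma guide_reaches_colour:
  assumes "a \<in> V" "(a, w) \<in> part_edges ^^ n"
  shows "\<exists>b\<in>ball_out guide a n. b \<in> V \<and> col b = col w \<and> part b = part a"
proof -
  have "col w \<in> {1..m}"
    using part_edges_relpow[OF assms(2,1)] col_range by blast
  then obtain b where b: "col b = col w" "b \<in> ball_out bfs_arcs a n"
    using bfs_orientation_reaches[where T = "\<lambda>k. {w. col w = k}", OF _ assms(2)]
    unfolding bfs_arcs_def by blast
  have "b \<in> V \<and> part b = part a"
    using ball_out_within_part[OF _ assms(1) b(2)] bfs_orientation_subset unfolding bfs_arcs_def by blast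
  moreover have "ball_out bfs_arcs a n \<subseteq> ball_out guide a n"
    unfolding guide_def by (intro ball_out_mono) auto
  ultimately show ?thesis using b by blast
qed

lemma guide_jumps:
  assumes "b \<in> V" "x \<in> reach_set k k' \<delta>" "\<delta> \<le> r" "part x \<noteq> part b" "(col b, k) \<in> S (Suc d)"
    and "finite P" "card P < r + 2"
  shows "\<exists>b'\<in>ball_out guide b (Suc \<delta>). b' \<in> V \<and> col b' = k' \<and> (part b' = part x \<or> part b' \<notin> P)"
proof -
  define A where "A = {a \<in> reach_set k k' \<delta>. part a \<noteq> part b}"
  have "finite A"
    unfolding A_def reach_set_def using finite_V by simp
  moreover have "x \<in> A"
    unfolding A_def using assms(2,4) by simp
  ultimately obtain a where a: "a \<in> bounded_transversal (r + 2) part A" "part a = part x \<or> part a \<notin> P"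
    using bounded_transversal_hits[OF _ _ assms(6,7), where f = part] by blast
  have "a \<in> A"
    using bounded_transversal_subset a(1) ..
  then obtain n w where aV: "a \<in> V" "col a = k" "part a \<noteq> part b"
    and n: "n \<le> \<delta>" "col w = k'" "(a, w) \<in> part_edges ^^ n"
    unfolding A_def reach_set_def by blast
  have "k \<in> {1..m}" "k' \<in> {1..m}"
    using col_range aV n part_edges_relpow[OF n(3) aV(1)] by auto
  moreover have "(b, a) \<in> E"
    using cross_edge[OF assms(1) aV(1)] aV assms(5) by simp
  ultimately have "(b, a) \<in> jump_arcs"
    unfolding jump_arcs_def using a(1) assms(3)
    by (simp only: mem_Collect_eq case_prod_conv A_def)
      (intro conjI bexI[of _ k] bexI[of _ k'] exI[of _ \<delta>], simp_all)
  then have a_ball: "a \<in> ball_out guide b 1"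
    unfolding guide_def by (intro ball_out_arc) simp
  obtain b' where b': "b' \<in> ball_out guide a n" "b' \<in> V" "col b' = k'" "part b' = part a"
    using guide_reaches_colour[OF aV(1) n(3)] n(2) by blast
  have "b' \<in> ball_out guide b (1 + n)"
    using a_ball b'(1) by (rule ball_out_trans)
  moreover have "ball_out guide b (1 + n) \<subseteq> ball_out guide b (Suc \<delta>)"
    using n(1) by (intro ball_out_mono) simp_all
  ultimately have "b' \<in> ball_out guide b (Suc \<delta>)" ..
  then show ?thesis
    using b'(2-4) a(2) by auto
qed

end

section \<open>Shadowing a shortest path\<close>

locale guidance_walk = guidance_step +
  fixes x :: "nat \<Rightarrow> 'a" and l :: nat
  assumes walk_edge: "i < l \<Longrightarrow> (x i, x (Suc i)) \<in> E"
    and walk_start: "x 0 \<in> V"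
    and walk_short: "l \<le> r"
begin

lemma walk_in_V: "i \<le> l \<Longrightarrow> x i \<in> V"
proof (cases i)
  case (Suc j)
  moreover assume "i \<le> l"
  ultimately show ?thesis using walk_edge[of j] edge_in_V by simp
qed (simp add: walk_start)

definition crossing :: "nat \<Rightarrow> bool" where
  "crossing i \<longleftrightarrow> i < l \<and> part (x i) \<noteq> part (x (Suc i))"

definition walk_parts :: "nat set" where
  "walk_parts = (\<lambda>i. part (x i)) ` {..l}"

lemma walk_within_part:
  assumes "p \<le> q" "q \<le> l" "\<And>i. p \<le> i \<Longrightarrow> i < q \<Longrightarrow> \<not> crossing i"
  shows "(x p, x q) \<in> part_edges ^^ (q - p)"
  using assms(1) proof (rule relpow_of_walk)
  fix i assume "p \<le> i" "i < q"
  then show "(x i, x (Suc i)) \<in> part_edges"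
    unfolding part_edges_def using assms(2) assms(3)[of i] walk_edge[of i] by (simp add: crossing_def)
qed

lemma finite_walk_parts: "finite walk_parts"
  unfolding walk_parts_def by simp

lemma card_walk_parts: "card walk_parts < r + 2"
proof -
  have "card walk_parts \<le> card {..l}"
    unfolding walk_parts_def by (rule card_image_le) simp
  then show ?thesis
    using walk_short by simp
qed

lemma part_in_walk_parts: "i \<le> l \<Longrightarrow> part (x i) \<in> walk_parts"
  unfolding walk_parts_def by simp

lemma crossing_colours:
  assumes "crossing q"
  shows "(col (x q), col (x (Suc q))) \<in> S (Suc d)"
proof -
  have "q < l" "part (x q) \<noteq> part (x (Suc q))"
    using assms unfolding crossing_def by simp_all
  then show ?thesis
    using cross_edge[OF walk_in_V[of q] walk_in_V[of "Suc q"]] walk_edge[of q] by simp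
qed

(* b can stand in for x q: it has the same colour, and its part is either that of x q or unused
   by the walk, so if q is a crossing the part of x (Suc q) differs from that of b and the
   crossing edge is mirrored at b. *)
definition shadows :: "nat \<Rightarrow> 'a \<Rightarrow> bool" where
  "shadows q b \<longleftrightarrow> b \<in> ball_out guide (x 0) q \<and> b \<in> V \<and> col b = col (x q) \<and>
     (part b = part (x q) \<or> part b \<notin> walk_parts)"

lemma shadows_before_crossing:
  assumes "q \<le> l" "\<And>i. i < q \<Longrightarrow> \<not> crossing i"
  shows "\<exists>b. shadows q b"
proof -
  have path: "(x 0, x q) \<in> part_edges ^^ q"
    using walk_within_part[of 0 q] assms by simp
  obtain b where b: "b \<in> ball_out guide (x 0) q" "b \<in> V" "col b = col (x q)" "part b = part (x 0)"
    using guide_reaches_colour[OF walk_start path] by blast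
  moreover have "part (x q) = part (x 0)"
    using part_edges_relpow[OF path walk_start] by simp
  ultimately show ?thesis
    unfolding shadows_def by auto
qed

lemma shadows_next_crossing:
  assumes "shadows p b" "crossing p" "p < q" "q \<le> l" "\<And>i. p < i \<Longrightarrow> i < q \<Longrightarrow> \<not> crossing i"
  shows "\<exists>b'. shadows q b'"
proof -
  have b: "b \<in> ball_out guide (x 0) p" "b \<in> V" "col b = col (x p)"
    "part b = part (x p) \<or> part b \<notin> walk_parts"
    using assms(1) unfolding shadows_def by simp_all
  have path: "(x (Suc p), x q) \<in> part_edges ^^ (q - Suc p)"
    using assms(3-5) by (intro walk_within_part) auto
  have "x (Suc p) \<in> reach_set (col (x (Suc p))) (col (x q)) (q - Suc p)"
    unfolding reach_set_def using walk_in_V[of "Suc p"] assms(3,4) path by auto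
  moreover have "q - Suc p \<le> r"
    using assms(4) walk_short by simp
  moreover have "part (x (Suc p)) \<noteq> part b"
    using b(4) assms(2) part_in_walk_parts[of "Suc p"] unfolding crossing_def by auto
  moreover have "(col b, col (x (Suc p))) \<in> S (Suc d)"
    using b(3) crossing_colours[OF assms(2)] by simp
  ultimately obtain b' where b': "b' \<in> ball_out guide b (Suc (q - Suc p))" "b' \<in> V"
    "col b' = col (x q)" "part b' = part (x (Suc p)) \<or> part b' \<notin> walk_parts"
    using guide_jumps[OF b(2) _ _ _ _ finite_walk_parts card_walk_parts] by blast
  have "b' \<in> ball_out guide (x 0) (p + Suc (q - Suc p))"
    using b(1) b'(1) by (rule ball_out_trans)
  moreover have "p + Suc (q - Suc p) = q"
    using assms(3) by simp
  moreover have "part (x (Suc p)) = part (x q)"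
    using part_edges_relpow[OF path walk_in_V[of "Suc p"]] assms(3,4) by simp
  ultimately show ?thesis
    unfolding shadows_def using b'(2-4) by auto
qed

lemma shadows_exists: "q \<le> l \<Longrightarrow> \<exists>b. shadows q b"
proof (induction q rule: less_induct)
  case (less q)
  show ?case
  proof (cases "\<exists>i<q. crossing i")
    case False
    then show ?thesis
      using shadows_before_crossing less.prems by blast
  next
    case True
    define p where "p = Max {i. i < q \<and> crossing i}"
    have fin: "finite {i. i < q \<and> crossing i}"
      by simp
    have p: "p < q" "crossing p"
      using Max_in[OF fin] True unfolding p_def by auto
    have "\<not> crossing i" if "p < i" "i < q" for i
    proof
      assume "crossing i"
      then have "i \<le> p"
        unfolding p_def using that(2) by (intro Max_ge[OF fin]) simp
      with that(1) show False by simp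
    qed
    moreover obtain b where "shadows p b"
      using less.IH p(1) less.prems by auto
    ultimately show ?thesis
      using shadows_next_crossing p less.prems by blast
  qed
qed

lemma last_crossing_guided:
  assumes "crossing q0"
  shows "\<exists>a b. a + b = l - 1 \<and> (\<exists>y\<in>ball_out guide (x 0) a. \<exists>z\<in>ball_out guide (x l) b. (y, z) \<in> E)"
proof -
  define q where "q = Max {i. crossing i}"
  have fin: "finite {i. crossing i}"
    unfolding crossing_def by simp
  have q: "crossing q"
    using Max_in[OF fin] assms unfolding q_def by auto
  then have "q < l"
    unfolding crossing_def by simp
  have "\<not> crossing i" if "q < i" for i
  proof
    assume "crossing i"
    then have "i \<le> q"
      unfolding q_def by (intro Max_ge[OF fin]) simp
    with that show False by simp
  qed
  then have "(x (Suc q), x l) \<in> part_edges ^^ (l - Suc q)"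
    using \<open>q < l\<close> by (intro walk_within_part) auto
  then have path_back: "(x l, x (Suc q)) \<in> part_edges ^^ (l - Suc q)"
    by (rule relpow_sym[OF sym_part_edges])
  obtain z where z: "z \<in> ball_out guide (x l) (l - Suc q)" "z \<in> V" "col z = col (x (Suc q))"
    "part z = part (x l)"
    using guide_reaches_colour[OF walk_in_V[of l] path_back] by blast
  have "\<exists>y. shadows q y"
    using \<open>q < l\<close> by (intro shadows_exists) simp
  then obtain y where "shadows q y" ..
  then have y: "y \<in> ball_out guide (x 0) q" "y \<in> V" "col y = col (x q)"
    "part y = part (x q) \<or> part y \<notin> walk_parts"
    unfolding shadows_def by simp_all
  have "part (x (Suc q)) = part (x l)"
    using part_edges_relpow[OF path_back walk_in_V[of l]] by simp
  then have "part y \<noteq> part z"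
    using y(4) z(4) q part_in_walk_parts[of "Suc q"] unfolding crossing_def by auto
  then have "(y, z) \<in> E"
    using cross_edge[OF y(2) z(2)] crossing_colours[OF q] y(3) z(3) by simp
  moreover have "q + (l - Suc q) = l - 1"
    using \<open>q < l\<close> by simp
  ultimately show ?thesis
    using y(1) z(1) by blast
qed

end

context guidance_step
begin

lemma guide_within_part:
  assumes "u \<in> V" "v \<in> V" "u \<noteq> v" "l \<le> r" "graph_dist_is (V, E) u v l"
    and "(u, v) \<in> part_edges ^^ l"
  shows "\<exists>a b. a + b = l - 1 \<and> (\<exists>y\<in>ball_out guide u a. \<exists>z\<in>ball_out guide v b. (y, z) \<in> E)"
proof -
  have path: "(u, v) \<in> edges (part_graph (part u)) ^^ l" and same_part: "part v = part u"
    using part_edges_relpow[OF assms(6,1)] by simp_all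
  from assms(5) path have "graph_dist_is (part_graph (part u)) u v l"
    by (rule graph_dist_is_induced_subgraph)
  moreover have "u \<in> verts (part_graph (part u))" "v \<in> verts (part_graph (part u))"
    using assms(1,2) same_part by simp_all
  moreover have "weak_guidance_system (part_graph (part u)) r (part_guide (part u))"
    using part_guide_guides assms(1) by simp
  ultimately have "\<exists>a b. a + b = l - 1 \<and> (\<exists>y\<in>ball_out (part_guide (part u)) u a.
      \<exists>z\<in>ball_out (part_guide (part u)) v b. (y, z) \<in> edges (part_graph (part u)))"
    using assms(3,4) unfolding weak_guidance_system_def by simp
  then obtain a b y z where ab: "a + b = l - 1" "y \<in> ball_out (part_guide (part u)) u a"
    "z \<in> ball_out (part_guide (part u)) v b" "(y, z) \<in> edges (part_graph (part u))"
    by auto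
  have "part_guide (part u) \<subseteq> guide"
    using part_guide_subset_rec_arcs[OF assms(1)] unfolding guide_def by blast
  then have part_guide_ball: "ball_out (part_guide (part u)) w n \<subseteq> ball_out guide w n" for w n
    by (rule ball_out_mono) simp
  have "y \<in> ball_out guide u a" "z \<in> ball_out guide v b"
    using subsetD[OF part_guide_ball ab(2)] subsetD[OF part_guide_ball ab(3)] .
  moreover have "(y, z) \<in> E"
    using ab(4) by simp
  ultimately show ?thesis
    using ab(1) by (intro exI[of _ a] exI[of _ b] conjI bexI[of _ y] bexI[of _ z])
qed

theorem guide_weak_guidance_system: "weak_guidance_system (V, E) r guide"
  unfolding weak_guidance_system_def partial_orientation_def
proof (intro conjI ballI allI impI)
  show "guide \<subseteq> edges (V, E)"
    using guide_subset by simp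
  fix u v l
  assume uv: "u \<in> verts (V, E)" "v \<in> verts (V, E)" and h: "u \<noteq> v \<and> l \<le> r \<and> graph_dist_is (V, E) u v l"
  obtain x where x: "x 0 = u" "x l = v" "\<And>i. i < l \<Longrightarrow> (x i, x (Suc i)) \<in> E"
    using h unfolding graph_dist_is_def relpow_fun_conv by auto
  interpret guidance_walk V E anc col S d m r c part_guide x l
    using x uv h by unfold_locales auto
  show "\<exists>a b. a + b = l - 1 \<and> (\<exists>y\<in>ball_out guide u a. \<exists>z\<in>ball_out guide v b. (y, z) \<in> edges (V, E))"
  proof (cases "\<exists>q. crossing q")
    case True
    then show ?thesis
      using last_crossing_guided x(1,2) by auto
  next
    case False
    then have "(x 0, x l) \<in> part_edges ^^ (l - 0)"
      by (intro walk_within_part) auto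
    then show ?thesis
      using guide_within_part uv h x(1,2) by simp
  qed
qed

lemma guide_max_outdegree: "max_outdegree_le (V, E) guide (c + m + m * m * (r + 1) * (r + 2))"
  unfolding max_outdegree_le_def using card_guide_out by simp

end

section \<open>Induction on the depth\<close>

lemma weak_guidance_system_step:
  fixes G :: "'a graph"
  assumes "simple_graph G" "has_tree_model m (Suc d) G"
    and IH: "\<And>G' :: 'a graph. simple_graph G' \<Longrightarrow> has_tree_model m d G' \<Longrightarrow>
      \<exists>H. weak_guidance_system G' r H \<and> max_outdegree_le G' H c"
  shows "\<exists>H. weak_guidance_system G r H \<and> max_outdegree_le G H (c + m + m * m * (r + 1) * (r + 2))"
proof -
  obtain V E where G: "G = (V, E)"
    by (cases G)
  obtain anc col S where model: "tree_anc V (Suc d) anc" "\<forall>v\<in>V. col v \<in> {1..m}"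
    "signature m S" "\<forall>u\<in>V. \<forall>v\<in>V. u \<noteq> v \<longrightarrow>
       ((u, v) \<in> E \<longleftrightarrow> (col u, col v) \<in> S (tree_half_dist anc u v))"
    using assms(2) unfolding has_tree_model_def G by auto
  have "\<forall>l\<in>anc d ` V. \<exists>H. weak_guidance_system (induced_subgraph (V, E) {w. anc d w = l}) r H \<and>
      max_outdegree_le (induced_subgraph (V, E) {w. anc d w = l}) H c"
  proof
    fix l
    have "simple_graph (induced_subgraph (V, E) {w. anc d w = l})"
      using assms(1) unfolding G by (rule simple_graph_induced_subgraph)
    moreover have "has_tree_model m d (induced_subgraph (V, E) {w. anc d w = l})"
      using has_tree_model_part[of "(V, E)"] model by simp
    ultimately show "\<exists>H. weak_guidance_system (induced_subgraph (V, E) {w. anc d w = l}) r H \<and>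
        max_outdegree_le (induced_subgraph (V, E) {w. anc d w = l}) H c"
      by (rule IH)
  qed
  then obtain part_guide where part_guide: "\<forall>l\<in>anc d ` V.
      weak_guidance_system (induced_subgraph (V, E) {w. anc d w = l}) r (part_guide l) \<and>
      max_outdegree_le (induced_subgraph (V, E) {w. anc d w = l}) (part_guide l) c"
    by (rule bchoice[THEN exE])
  interpret guidance_step V E anc col S d m r c part_guide
  proof
    show "simple_graph (V, E)" using assms(1) unfolding G .
    show "tree_anc V (Suc d) anc" by (rule model(1))
  qed (use model part_guide in blast)+
  show ?thesis
    using guide_weak_guidance_system guide_max_outdegree unfolding G by blast
qed

theorem tree_model_weak_guidance_system:
  assumes "simple_graph G" "has_tree_model m d G"
  shows "\<exists>H. weak_guidance_system G r H \<and> max_outdegree_le G H (d * (m + m * m * (r + 1) * (r + 2)))"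
  using assms
proof (induction d arbitrary: G)
  case 0
  then obtain anc where "tree_anc (verts G) 0 anc"
    unfolding has_tree_model_def by blast
  then have "weak_guidance_system G r {}"
    by (intro weak_guidance_system_subsingleton) (rule tree_anc_subsingleton)
  moreover have "max_outdegree_le G {} 0"
    unfolding max_outdegree_le_def by simp
  ultimately show ?case by auto
next
  case (Suc d)
  from weak_guidance_system_step[OF Suc.prems Suc.IH] show ?case
    by (simp add: algebra_simps)
qed

theorem lemma8:
  fixes \<C> :: "'a graph set" and r :: nat
  assumes "\<forall>G\<in>\<C>. simple_graph G"
    and "bounded_shrub_depth \<C>"
    and "r > 0"
  shows "\<exists>c>0. \<forall>G\<in>\<C>. \<exists>H. weak_guidance_system G r H \<and> max_outdegree_le G H c"
proof -
  obtain d m where model: "\<forall>G\<in>\<C>. has_tree_model m d G"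
    using assms(2) unfolding bounded_shrub_depth_def by blast
  let ?c = "d * (m + m * m * (r + 1) * (r + 2))"
  have "\<exists>H. weak_guidance_system G r H \<and> max_outdegree_le G H (Suc ?c)" if "G \<in> \<C>" for G
    using tree_model_weak_guidance_system[of G m d r] assms(1) model that max_outdegree_le_mono
    by (meson le_SucI order_refl)
  then show ?thesis
    by (intro exI[of _ "Suc ?c"]) simp
qed

end
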